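(* Let $m\in\mathbb N\cup\{\infty\}$ and let $$g(\mathbf X)=\sum_{q=1}^m\sum_{\boldsymbol\alpha\in\Gamma_q}\overline{a_{(\boldsymbol\alpha)}}\mathbf X_{\boldsymbol\alpha}^*+a_0I+\sum_{q=1}^m\sum_{\boldsymbol\alpha\in\Gamma_q}a_{(\boldsymbol\alpha)}\mathbf X_{\boldsymbol\alpha},\qquad\mathbf X\in\mathbf B_{\mathbf n}(\mathcal H),$$ be a positive free $k$-pluriharmonic function on the polyball with scalar coefficients. Then for each $q\in\{1,\dots,m\}$, $$\sup_{\boldsymbol\lambda=\{\lambda_{i,j}\}\in\mathbf B_{\mathbf n}(\mathbb C)^-}\Big|\sum_{\boldsymbol\alpha\in\Gamma_q}a_{(\boldsymbol\alpha)}\boldsymbol\lambda_{\boldsymbol\alpha}\Big|\le a_0\cos\frac{\pi}{\left[\frac mq\right]+2}.$$ In particular, $$\sum_{i=1}^k\Big(\sum_{j=1}^{n_i}\Big|\frac{\partial\widetilde g}{\partial z_{i,j}}(0)\Big|^2\Big)^{1/2}\le a_0\cos\frac{\pi}{m+2},$$ where $\widetilde g(\mathbf z)=g(\mathbf z)$ for $\mathbf z=\{z_{i,j}\}\in(\mathbb C^{n_1})_1\times\cdots\times(\mathbb C^{n_k})_1$.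
   Context: Fix $k\in\mathbb N$, $\mathbf n=(n_1,\dots,n_k)\in\mathbb N^k$; Hilbert spaces are separable. The regular polyball $\mathbf B_{\mathbf n}(\mathcal H)$ is the set of $\mathbf X=(X_1,\dots,X_k)$, $X_i=(X_{i,1},\dots,X_{i,n_i})\in B(\mathcal H)^{n_i}$, with entries of $X_s$ commuting with entries of $X_t$ for $s\ne t$, $\|\sum_jX_{i,j}X_{i,j}^*\|<1$ for all $i$, and $\Delta_{\mathbf X}(I)$ positive invertible, where $\Delta_{\mathbf X}=(\mathrm{id}-\Phi_{X_1})\circ\cdots\circ(\mathrm{id}-\Phi_{X_k})$, $\Phi_{X_i}(Y)=\sum_jX_{i,j}YX_{i,j}^*$. For $\mathcal H=\mathbb C$ this is $\mathbf B_{\mathbf n}(\mathbb C)=(\mathbb C^{n_1})_1\times\cdots\times(\mathbb C^{n_k})_1$ (product of open Euclidean unit balls), with closure $\mathbf B_{\mathbf n}(\mathbb C)^-$. $\mathbb F_{n_i}^+$: free semigroup on $g^i_1,\dots,g^i_{n_i}$ with identity $g^i_0$. For $\alpha=g^i_{j_1}\cdots g^i_{j_p}$, $X_{i,\alpha}=X_{i,j_1}\cdots X_{i,j_p}$, $\mathbf X_{\boldsymbol\alpha}=X_{1,\alpha_1}\cdots X_{k,\alpha_k}$ (similarly $\boldsymbol\lambda_{\boldsymbol\alpha}$ for scalars); $\Gamma_q=\{\boldsymbol\alpha:|\alpha_1|+\dots+|\alpha_k|=q\}$. The series defining $g$ converge in norm for every $\mathcal H$ and $\mathbf X\in\mathbf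 B_{\mathbf n}(\mathcal H)$, and positivity means $g(\mathbf X)\ge0$ for all such $\mathcal H,\mathbf X$ (so $a_0\ge0$). $[x]$ is the integer part of $x$; $\cos\frac{\pi}{[m/q]+2}$ and $\cos\frac{\pi}{m+2}$ are read as $1$ when $m=\infty$. *)

theory Defs
  imports "HOL-Analysis.Analysis" "HOL-Library.Extended_Nat"
begin

text \<open>The model separable infinite-dimensional Hilbert space: l2(N) as a set of sequences.
Operators are functions on sequences, only their behaviour on L2 matters.\<close>

type_synonym vec = "nat \<Rightarrow> complex"
type_synonym op = "vec \<Rightarrow> vec"

definition L2 :: "vec set" where
  "L2 = {f. summable (\<lambda>i. (cmod (f i))\<^sup>2)}"

definition inner2 :: "vec \<Rightarrow> vec \<Rightarrow> complex" where
  "inner2 f g = (\<Sum>i. f i * cnj (g i))"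

definition norm2 :: "vec \<Rightarrow> real" where
  "norm2 f = sqrt (\<Sum>i. (cmod (f i))\<^sup>2)"

definition basis2 :: "nat \<Rightarrow> vec" where
  "basis2 j = (\<lambda>i. if i = j then 1 else 0)"

definition bop :: "op \<Rightarrow> bool" where
  "bop T \<longleftrightarrow> (\<forall>f\<in>L2. T f \<in> L2)
     \<and> (\<forall>f\<in>L2. \<forall>g\<in>L2. \<forall>c. T (\<lambda>i. c * f i + g i) = (\<lambda>i. c * T f i + T g i))
     \<and> (\<exists>C. \<forall>f\<in>L2. norm2 (T f) \<le> C * norm2 f)"

definition opnorm :: "op \<Rightarrow> real" where
  "opnorm T = Sup {norm2 (T f) | f. f \<in> L2 \<and> norm2 f \<le> 1}"

text \<open>Adjoint: (T* g)(j) = <g, T e_j>.\<close>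
definition adj :: "op \<Rightarrow> op" where
  "adj T g = (\<lambda>j. \<Sum>i. g i * cnj (T (basis2 j) i))"

definition positive_op :: "op \<Rightarrow> bool" where
  "positive_op T \<longleftrightarrow> (\<forall>h\<in>L2. inner2 (T h) h \<in> \<real> \<and> 0 \<le> Re (inner2 (T h) h))"

definition invertible_op :: "op \<Rightarrow> bool" where
  "invertible_op T \<longleftrightarrow> bop T \<and> (\<exists>S. bop S \<and> (\<forall>h\<in>L2. S (T h) = h \<and> T (S h) = h))"

text \<open>Tuples X: X i j is X_{i+1,j+1} for i < k, j < n i (0-based indices).\<close>

definition Phi :: "nat \<Rightarrow> (nat \<Rightarrow> nat \<Rightarrow> op) \<Rightarrow> nat \<Rightarrow> op \<Rightarrow> op" where
  "Phi n_i X i Y = (\<lambda>h l. \<Sum>j<n_i. X i j (Y (adj (X i j) h)) l)"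

definition Delta :: "nat \<Rightarrow> (nat \<Rightarrow> nat) \<Rightarrow> (nat \<Rightarrow> nat \<Rightarrow> op) \<Rightarrow> op \<Rightarrow> op" where
  "Delta k n X = foldr (\<lambda>i D Y. (\<lambda>h l. D Y h l - Phi (n i) X i (D Y) h l)) [0..<k] (\<lambda>Y. Y)"

definition in_polyball :: "nat \<Rightarrow> (nat \<Rightarrow> nat) \<Rightarrow> (nat \<Rightarrow> nat \<Rightarrow> op) \<Rightarrow> bool" where
  "in_polyball k n X \<longleftrightarrow>
     (\<forall>i<k. \<forall>j<n i. bop (X i j))
   \<and> (\<forall>s<k. \<forall>t<k. s \<noteq> t \<longrightarrow> (\<forall>j<n s. \<forall>l<n t. \<forall>h\<in>L2. X s j (X t l h) = X t l (X s j h)))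
   \<and> (\<forall>i<k. opnorm (\<lambda>h l. \<Sum>j<n i. X i j (adj (X i j) h) l) < 1)
   \<and> positive_op (Delta k n X id) \<and> invertible_op (Delta k n X id)"

text \<open>Multi-indices alpha: alpha i is a word (list of letters < n i) for i < k, empty for i >= k.\<close>
definition Gamma :: "nat \<Rightarrow> (nat \<Rightarrow> nat) \<Rightarrow> nat \<Rightarrow> (nat \<Rightarrow> nat list) set" where
  "Gamma k n q = {\<alpha>. (\<forall>i. k \<le> i \<longrightarrow> \<alpha> i = []) \<and> (\<forall>i<k. set (\<alpha> i) \<subseteq> {..<n i})
                     \<and> (\<Sum>i<k. length (\<alpha> i)) = q}"

definition X_word :: "(nat \<Rightarrow> nat \<Rightarrow> op) \<Rightarrow> nat \<Rightarrow> nat list \<Rightarrow> op" where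
  "X_word X i w = foldr (\<lambda>j T. X i j \<circ> T) w id"

definition X_multi :: "nat \<Rightarrow> (nat \<Rightarrow> nat \<Rightarrow> op) \<Rightarrow> (nat \<Rightarrow> nat list) \<Rightarrow> op" where
  "X_multi k X \<alpha> = foldr (\<lambda>i T. X_word X i (\<alpha> i) \<circ> T) [0..<k] id"

definition lam_multi :: "nat \<Rightarrow> (nat \<Rightarrow> nat \<Rightarrow> complex) \<Rightarrow> (nat \<Rightarrow> nat list) \<Rightarrow> complex" where
  "lam_multi k z \<alpha> = (\<Prod>i<k. prod_list (map (z i) (\<alpha> i)))"

definition P_op :: "nat \<Rightarrow> (nat \<Rightarrow> nat) \<Rightarrow> ((nat \<Rightarrow> nat list) \<Rightarrow> complex) \<Rightarrow> (nat \<Rightarrow> nat \<Rightarrow> op) \<Rightarrow> nat \<Rightarrow> op" where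
  "P_op k n a X q = (\<lambda>h l. \<Sum>\<alpha>\<in>Gamma k n q. a \<alpha> * X_multi k X \<alpha> h l)"

definition series_limit :: "nat \<Rightarrow> (nat \<Rightarrow> nat) \<Rightarrow> ((nat \<Rightarrow> nat list) \<Rightarrow> complex) \<Rightarrow> enat \<Rightarrow> (nat \<Rightarrow> nat \<Rightarrow> op) \<Rightarrow> op \<Rightarrow> bool" where
  "series_limit k n a m X S = (case m of
      enat M \<Rightarrow> (\<forall>h\<in>L2. S h = (\<lambda>l. \<Sum>q\<in>{1..M}. P_op k n a X q h l))
    | \<infinity> \<Rightarrow> (\<lambda>N. opnorm (\<lambda>h l. (\<Sum>q\<in>{1..N}. P_op k n a X q h l) - S h l)) \<longlonglongrightarrow> 0)"

definition g_op :: "real \<Rightarrow> op \<Rightarrow> op" where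
  "g_op a0 S = (\<lambda>h l. adj S h l + of_real a0 * h l + S h l)"

definition cpolyball :: "nat \<Rightarrow> (nat \<Rightarrow> nat) \<Rightarrow> (nat \<Rightarrow> nat \<Rightarrow> complex) set" where
  "cpolyball k n = {z. \<forall>i<k. (\<Sum>j<n i. (cmod (z i j))\<^sup>2) \<le> 1}"

definition g_scalar :: "nat \<Rightarrow> (nat \<Rightarrow> nat) \<Rightarrow> ((nat \<Rightarrow> nat list) \<Rightarrow> complex) \<Rightarrow> real \<Rightarrow> enat \<Rightarrow> (nat \<Rightarrow> nat \<Rightarrow> complex) \<Rightarrow> complex" where
  "g_scalar k n a a0 m z = (let s = (case m of
        enat M \<Rightarrow> (\<Sum>q\<in>{1..M}. \<Sum>\<alpha>\<in>Gamma k n q. a \<alpha> * lam_multi k z \<alpha>)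
      | \<infinity> \<Rightarrow> (\<Sum>q. \<Sum>\<alpha>\<in>Gamma k n (Suc q). a \<alpha> * lam_multi k z \<alpha>))
     in cnj s + of_real a0 + s)"

definition wirtinger :: "(complex \<Rightarrow> complex) \<Rightarrow> complex \<Rightarrow> complex" where
  "wirtinger f w = (vector_derivative (\<lambda>t::real. f (w + of_real t)) (at 0)
                    - \<i> * vector_derivative (\<lambda>t::real. f (w + \<i> * of_real t)) (at 0)) / 2"

definition pderiv_at0 :: "((nat \<Rightarrow> nat \<Rightarrow> complex) \<Rightarrow> complex) \<Rightarrow> nat \<Rightarrow> nat \<Rightarrow> complex" where
  "pderiv_at0 G i j = wirtinger (\<lambda>t. G (\<lambda>i' j'. if i' = i \<and> j' = j then t else 0)) 0"

definition cos_bound :: "enat \<Rightarrow> nat \<Rightarrow> real" where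
  "cos_bound m q = (case m of enat M \<Rightarrow> cos (pi / (real (M div q) + 2)) | \<infinity> \<Rightarrow> 1)"

end

theory Submission
  imports Defs
begin

(* A scalar point z with rows of Euclidean norm < 1 is a point of the polyball (acting by
   multiples of the identity), so positivity of g there reads 0 <= a0 + 2 Re (sum_q P_q(z)).
   Restricting to the line w z, w = rho e^(i theta), yields a nonnegative trigonometric series
   in theta whose q-th coefficient is rho^q P_q(z). The Fejer-Egervary-Szasz inequality
   |d_1| <= A cos(pi/(N+2)) for nonnegative trigonometric polynomials A + 2 Re sum_(r<=N) d_r e^(i r theta),
   applied after averaging over the q-th roots of unity, bounds it by a0 cos(pi/([m/q]+2));
   letting rho -> 1 gives the first claim (for m = infinity the tail of the series is cut off at
   a cost tending to 0). The gradient bound is the case q = 1 at the point whose rows are the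
   normalized conjugated degree-one coefficients. *)

lemma sum_cis_roots_of_unity:
  fixes L :: nat and r :: int
  assumes "L > 0"
  shows "(\<Sum>l<L. cis (2*pi*r*l/L)) = (if int L dvd r then of_nat L else 0)"
proof -
  define w where "w = cis (2*pi*r/L)"
  have powers: "cis (2*pi*r*l/L) = w ^ l" for l :: nat
  proof -
    have "w ^ l = cis (real l * (2*pi*r/L))" unfolding w_def by (simp only: Complex.DeMoivre)
    then show ?thesis by (simp add: ac_simps)
  qed
  have "w ^ L = cis (2*pi*r)" using assms by (simp add: w_def Complex.DeMoivre)
  then have "w ^ L = 1" by (simp add: cis_multiple_2pi)
  show ?thesis
  proof (cases "int L dvd r")
    case True
    then obtain j where j: "r = int L * j" by blast
    have "w = cis (2*pi*real_of_int j)"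
      unfolding w_def j by (rule arg_cong[where f=cis]) (use assms in simp)
    then have "w = 1" by (simp add: cis_multiple_2pi)
    then show ?thesis using True by (simp add: powers)
  next
    case False
    have "w \<noteq> 1"
    proof
      assume "w = 1"
      then have "cos (2*pi*r/L) = 1" by (simp add: w_def complex_eq_iff)
      then obtain x :: int where "2*pi*r/L = real_of_int x * 2 * pi" by (auto simp: cos_one_2pi_int)
      then have "real_of_int r = real L * real_of_int x" using assms by (simp add: field_simps)
      then have "r = int L * x" by (metis of_int_eq_iff of_int_mult of_int_of_nat_eq)
      with False show False by auto
    qed
    with \<open>w ^ L = 1\<close> have "(\<Sum>l<L. w ^ l) = 0" by (simp add: geometric_sum)
    then show ?thesis using False by (simp add: powers)
  qed
qed

lemma cos_odd_multiple_le:
  fixes L l :: nat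
  assumes "l < L"
  shows "cos ((2*l+1)*pi/L) \<le> cos (pi/L)"
proof -
  have L: "real L \<ge> 1" using assms by simp
  define x where "x = (2*l+1)*pi/L"
  have x1: "pi/L \<le> x" unfolding x_def using L by (simp add: divide_right_mono)
  have "(2*real l+1)*pi/L \<le> (2*L-1)*pi/L"
    using assms L by (intro divide_right_mono mult_right_mono) auto
  also have "(2*L-1)*pi/L = 2*pi - pi/L" using L by (simp add: field_simps)
  finally have x2: "x \<le> 2*pi - pi/L" by (simp add: x_def ac_simps)
  have p: "0 \<le> pi/L" "pi/L \<le> pi" using L by (simp_all add: field_simps)
  show ?thesis
  proof (cases "x \<le> pi")
    case True
    then have "cos x \<le> cos (pi/L)" using x1 p by (intro cos_monotone_0_pi_le) auto
    then show ?thesis by (simp add: x_def ac_simps)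
  next
    case False
    have "cos x = cos (2*pi - x)" by (simp add: cos_diff)
    also have "\<dots> \<le> cos (pi/L)" using x2 False p by (intro cos_monotone_0_pi_le) auto
    finally show ?thesis by (simp add: x_def)
  qed
qed

lemma cos_pi_div_pos: "3 \<le> L \<Longrightarrow> 0 < cos (pi / real L)"
proof (rule cos_gt_zero_pi)
  assume L: "3 \<le> L"
  then have "0 < pi/L" by simp
  then show "- (pi/2) < pi/L" using pi_gt_zero by linarith
  have "pi/L \<le> pi/3" using L by (intro divide_left_mono) auto
  then show "pi/L < pi/2" using pi_gt_zero by linarith
qed

(* Averaging a trigonometric polynomial of degree at most L - 2 over the L points
   phi + 2 pi l / L with these nonnegative weights isolates its first coefficient. *)
definition fejer_weight :: "nat \<Rightarrow> nat \<Rightarrow> real" where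
  "fejer_weight L l = 1 - cos ((2*l+1)*pi/L) / cos (pi/L)"

lemma fejer_weight_nonneg: "3 \<le> L \<Longrightarrow> l < L \<Longrightarrow> 0 \<le> fejer_weight L l"
  using cos_odd_multiple_le[of l L] cos_pi_div_pos[of L] by (simp add: fejer_weight_def add.commute)

lemma fejer_weight_mult_cis:
  fixes r :: int and l L :: nat
  shows "of_real (fejer_weight L l) * cis (2*pi*r*l/L) = cis (2*pi*r*l/L)
    - (cis (pi/L) * cis (2*pi*(r + 1)*l/L) + cis (-pi/L) * cis (2*pi*(r - 1)*l/L)) / (2 * cos (pi/L))"
proof -
  have shift_up: "cis (pi/L) * cis (2*pi*(r + 1)*l/L) = cis ((2*l+1)*pi/L) * cis (2*pi*r*l/L)"
    unfolding cis_mult by (rule arg_cong[where f=cis]) (simp add: algebra_simps add_divide_distrib)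
  have shift_down: "cis (-pi/L) * cis (2*pi*(r - 1)*l/L) = cis (-((2*l+1)*pi/L)) * cis (2*pi*r*l/L)"
    unfolding cis_mult by (rule arg_cong[where f=cis]) (simp add: algebra_simps add_divide_distrib diff_divide_distrib)
  have cos_cis: "complex_of_real (cos ((2*l+1)*pi/L)) = (cis ((2*l+1)*pi/L) + cis (-((2*l+1)*pi/L))) / 2"
    by (simp add: complex_eq_iff)
  have "of_real (fejer_weight L l) = 1 - complex_of_real (cos ((2*l+1)*pi/L)) / of_real (cos (pi/L))"
    by (simp add: fejer_weight_def add.commute)
  also have "\<dots> = 1 - (cis ((2*l+1)*pi/L) + cis (-((2*l+1)*pi/L))) / (2 * cos (pi/L))"
    unfolding cos_cis by simp
  finally have "of_real (fejer_weight L l) * cis (2*pi*r*l/L) = cis (2*pi*r*l/L)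
      - (cis ((2*l+1)*pi/L) * cis (2*pi*r*l/L) + cis (-((2*l+1)*pi/L)) * cis (2*pi*r*l/L)) / (2 * cos (pi/L))"
    by (simp add: left_diff_distrib times_divide_eq_left distrib_right)
  then show ?thesis by (simp only: shift_up shift_down)
qed

lemma fejer_weight_moment:
  fixes r :: nat
  assumes L: "3 \<le> L" and r: "r + 2 \<le> L"
  shows "(\<Sum>l<L. of_real (fejer_weight L l) * cis (2*pi*r*l/L)) =
    (if r = 0 then of_nat L else if r = 1 then - of_real (L / (2 * cos (pi/L))) * cis (-pi/L) else 0)"
proof -
  define c where "c = cos (pi/L)"
  have L0: "L > 0" using L by simp
  define e where "e s l = cis (2*pi*real_of_int s*real l/L)" for s :: int and l :: nat
  have summand: "of_real (fejer_weight L l) * cis (2*pi*r*l/L) =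
      e (int r) l - (cis (pi/L) * e (int r + 1) l + cis (-pi/L) * e (int r - 1) l) / (2 * c)" for l :: nat
    using fejer_weight_mult_cis[where r="int r"] by (simp add: e_def c_def)
  have sums: "(\<Sum>l<L. e s l) = (if int L dvd s then of_nat L else 0)" for s
    unfolding e_def by (rule sum_cis_roots_of_unity[OF L0])
  have d0: "int L dvd int r \<longleftrightarrow> r = 0" using r by (cases "r = 0") (auto dest: dvd_imp_le)
  have d1: "\<not> int L dvd int r + 1" using r by (auto dest: zdvd_imp_le)
  have d2: "int L dvd int r - 1 \<longleftrightarrow> r = 1"
  proof
    assume h: "int L dvd int r - 1"
    show "r = 1"
    proof (cases "r = 0")
      case True
      then show ?thesis using h L by simp
    next
      case False
      then show ?thesis using zdvd_imp_le[OF h] r by (cases "r = 1") auto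
    qed
  qed simp
  have "(\<Sum>l<L. of_real (fejer_weight L l) * cis (2*pi*r*l/L)) =
      (\<Sum>l<L. e (int r) l) - (cis (pi/L) * (\<Sum>l<L. e (int r + 1) l) + cis (-pi/L) * (\<Sum>l<L. e (int r - 1) l)) / (2 * c)"
    unfolding summand sum_subtractf sum_divide_distrib[symmetric] sum.distrib sum_distrib_left ..
  also have "\<dots> = (if r = 0 then of_nat L else if r = 1 then - of_real (L / (2 * c)) * cis (-pi/L) else 0)"
    unfolding sums using d0 d1 d2 by (simp add: of_int_add)
  finally show ?thesis by (simp add: c_def)
qed

lemma sum_fejer_weight:
  assumes "3 \<le> L"
  shows "(\<Sum>l<L. fejer_weight L l) = L"
proof -
  have "complex_of_real (\<Sum>l<L. fejer_weight L l) = of_nat L"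
    using fejer_weight_moment[OF assms, of 0] assms by (simp add: of_real_sum)
  then show ?thesis by (metis of_real_eq_iff of_real_of_nat_eq)
qed

lemma fejer_weight_shifted_moment:
  fixes r :: nat and \<phi> :: real
  assumes L: "3 \<le> L" and r: "1 \<le> r" "r + 2 \<le> L"
  shows "(\<Sum>l<L. of_real (fejer_weight L l) * cis (r * (\<phi> + 2*pi*l/L))) =
    (if r = 1 then - of_real (L / (2 * cos (pi/L))) * cis (\<phi> - pi/L) else 0)"
proof -
  have "cis (r * (\<phi> + 2*pi*l/L)) = cis (r * \<phi>) * cis (2*pi*r*l/L)" for l :: nat
    unfolding cis_mult by (simp add: algebra_simps add_divide_distrib)
  then have "(\<Sum>l<L. of_real (fejer_weight L l) * cis (r * (\<phi> + 2*pi*l/L))) =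
      cis (r * \<phi>) * (\<Sum>l<L. of_real (fejer_weight L l) * cis (2*pi*r*l/L))"
    by (simp add: sum_distrib_left mult_ac)
  also have "\<dots> = (if r = 1 then - of_real (L / (2 * cos (pi/L))) * (cis \<phi> * cis (-pi/L)) else 0)"
    using r by (simp add: fejer_weight_moment[OF L r(2)])
  also have "cis \<phi> * cis (-pi/L) = cis (\<phi> - pi/L)"
    by (simp add: cis_mult)
  finally show ?thesis .
qed

lemma nonneg_trig_poly_coeff1_le:
  fixes d :: "nat \<Rightarrow> complex" and A :: real and N L :: nat
  assumes N: "1 \<le> N" and L: "N + 2 \<le> L"
    and nonneg: "\<And>\<theta>. 0 \<le> A + 2 * Re (\<Sum>r\<in>{1..N}. d r * cis (real r * \<theta>))"
  shows "cmod (d 1) \<le> A * cos (pi / L)"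
proof -
  have L3: "3 \<le> L" using N L by simp
  define c where "c = cos (pi / L)"
  have c: "0 < c" using cos_pi_div_pos[OF L3] by (simp add: c_def)
  define \<theta> where "\<theta> l = (pi/L - Arg (d 1)) + 2*pi*l/L" for l :: nat
  define G where "G t = (\<Sum>r\<in>{1..N}. d r * cis (real r * t))" for t
  have "(\<Sum>l<L. of_real (fejer_weight L l) * G (\<theta> l)) =
      (\<Sum>r\<in>{1..N}. d r * (\<Sum>l<L. of_real (fejer_weight L l) * cis (r * \<theta> l)))"
    unfolding G_def by (simp add: sum_distrib_left mult_ac) (rule sum.swap)
  also have "\<dots> = (\<Sum>r\<in>{1..N}. if r = 1 then d 1 * (- of_real (L / (2 * c)) * cis (- Arg (d 1))) else 0)"
    using L by (intro sum.cong refl) (simp add: \<theta>_def fejer_weight_shifted_moment[OF L3] c_def)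
  also have "\<dots> = d 1 * (- of_real (L / (2 * c)) * cis (- Arg (d 1)))"
    using N by simp
  also have "\<dots> = - of_real (L / (2 * c) * cmod (d 1))"
    by (subst (1) rcis_cmod_Arg[symmetric]) (simp add: rcis_def cis_mult)
  finally have weighted: "(\<Sum>l<L. of_real (fejer_weight L l) * G (\<theta> l)) = - of_real (L / (2 * c) * cmod (d 1))" .
  have "0 \<le> (\<Sum>l<L. fejer_weight L l * (A + 2 * Re (G (\<theta> l))))"
    using nonneg by (intro sum_nonneg mult_nonneg_nonneg fejer_weight_nonneg[OF L3]) (simp_all add: G_def)
  also have "\<dots> = A * (\<Sum>l<L. fejer_weight L l) + 2 * Re (\<Sum>l<L. of_real (fejer_weight L l) * G (\<theta> l))"
    by (simp add: sum.distrib sum_distrib_left sum_distrib_right algebra_simps Re_sum)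
  also have "\<dots> = A * L - L / c * cmod (d 1)"
    unfolding weighted sum_fejer_weight[OF L3] by simp
  finally have "L / c * cmod (d 1) \<le> A * L" by simp
  then show ?thesis using c L3 by (simp add: c_def field_simps)
qed

lemma sum_trig_poly_roots_of_unity:
  fixes c :: "nat \<Rightarrow> complex" and q P :: nat and \<theta> :: real
  assumes q: "0 < q"
  shows "(\<Sum>j<q. \<Sum>p\<in>{1..P}. c p * cis (p * ((\<theta> + 2*pi*j) / q)))
    = of_nat q * (\<Sum>r\<in>{1..P div q}. c (r * q) * cis (r * \<theta>))"
proof -
  have img: "(\<lambda>r. r * q) ` {1..P div q} = {p\<in>{1..P}. q dvd p}"
  proof (intro set_eqI iffI)
    fix p assume "p \<in> (\<lambda>r. r * q) ` {1..P div q}"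
    then obtain r where r: "r \<in> {1..P div q}" "p = r * q" by auto
    have "r * q \<le> P div q * q" using r by simp
    also have "\<dots> \<le> P" by simp
    finally show "p \<in> {p\<in>{1..P}. q dvd p}" using r q by auto
  next
    fix p assume p: "p \<in> {p\<in>{1..P}. q dvd p}"
    then obtain r where r: "p = r * q" by (auto elim: dvdE simp: mult.commute)
    have "r \<ge> 1" using p r by (cases r) auto
    moreover have "r * q div q \<le> P div q" using p r by (intro div_le_mono) simp
    ultimately show "p \<in> (\<lambda>r. r * q) ` {1..P div q}" using r q by auto
  qed
  have inj: "inj_on (\<lambda>r. r * q) {1..P div q}" using q by (auto simp: inj_on_def)
  have e: "cis (p * ((\<theta> + 2*pi*j) / q)) = cis (p * \<theta> / q) * cis (2*pi*real_of_int (int p)*j/q)" for p j :: nat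
    unfolding cis_mult by (rule arg_cong[where f=cis]) (simp add: algebra_simps add_divide_distrib)
  have "(\<Sum>j<q. \<Sum>p\<in>{1..P}. c p * cis (p * ((\<theta> + 2*pi*j) / q)))
      = (\<Sum>p\<in>{1..P}. c p * cis (p * \<theta> / q) * (\<Sum>j<q. cis (2*pi*real_of_int (int p)*j/q)))"
    unfolding e by (subst sum.swap) (simp add: sum_distrib_left mult_ac)
  also have "\<dots> = (\<Sum>p\<in>{1..P}. if q dvd p then of_nat q * (c p * cis (p * \<theta> / q)) else 0)"
    by (intro sum.cong refl) (subst sum_cis_roots_of_unity[OF q], simp)
  also have "\<dots> = of_nat q * (\<Sum>p\<in>{p\<in>{1..P}. q dvd p}. c p * cis (p * \<theta> / q))"
    by (simp add: sum.inter_filter[symmetric] sum_distrib_left)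
  also have "\<dots> = of_nat q * (\<Sum>r\<in>{1..P div q}. c (r * q) * cis (r * \<theta>))"
    unfolding img[symmetric] sum.reindex[OF inj] using q by (simp add: o_def)
  finally show ?thesis .
qed

lemma nonneg_trig_poly_coeff_le:
  fixes c :: "nat \<Rightarrow> complex" and A :: real and q P L :: nat
  assumes q: "1 \<le> q" "q \<le> P" and L: "P < q * (L - 1)"
    and nonneg: "\<And>\<theta>. 0 \<le> A + 2 * Re (\<Sum>p\<in>{1..P}. c p * cis (real p * \<theta>))"
  shows "cmod (c q) \<le> A * cos (pi / L)"
proof -
  define N where "N = P div q"
  have N: "1 \<le> N" using q by (simp add: N_def div_greater_zero_iff Suc_le_eq)
  have "N < L - 1" using less_mult_imp_div_less[of P "L - 1" q] L by (simp add: N_def mult.commute)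
  then have NL: "N + 2 \<le> L" by simp
  have "cmod (c (1 * q)) \<le> A * cos (pi / L)"
  proof (rule nonneg_trig_poly_coeff1_le[OF N NL])
    fix \<theta> :: real
    have "0 \<le> (\<Sum>j<q. A + 2 * Re (\<Sum>p\<in>{1..P}. c p * cis (p * ((\<theta> + 2*pi*j) / q))))"
      by (intro sum_nonneg nonneg)
    also have "\<dots> = q * A + 2 * Re (\<Sum>j<q. \<Sum>p\<in>{1..P}. c p * cis (p * ((\<theta> + 2*pi*j) / q)))"
      by (simp add: sum.distrib Re_sum sum_distrib_left)
    also have "\<dots> = q * (A + 2 * Re (\<Sum>r\<in>{1..N}. c (r * q) * cis (r * \<theta>)))"
      using q by (subst sum_trig_poly_roots_of_unity) (simp_all add: N_def algebra_simps)
    finally show "0 \<le> A + 2 * Re (\<Sum>r\<in>{1..N}. c (r * q) * cis (r * \<theta>))"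
      using q by (simp add: zero_le_mult_iff)
  qed
  then show ?thesis by simp
qed

lemma le_of_forall_mult_power_le:
  fixes x B :: real
  assumes "\<And>\<rho>. 0 < \<rho> \<Longrightarrow> \<rho> < 1 \<Longrightarrow> x * \<rho> ^ q \<le> B"
  shows "x \<le> B"
proof -
  have "((\<lambda>\<rho>. x * \<rho> ^ q) \<longlongrightarrow> x * 1 ^ q) (at_left (1::real))"
    by (intro tendsto_intros)
  moreover have "eventually (\<lambda>\<rho>. x * \<rho> ^ q \<le> B) (at_left (1::real))"
    using eventually_at_left_real[of 0 "1::real"] by (rule eventually_mono) (use assms in auto)
  ultimately have "x * 1 ^ q \<le> B"
    by (rule tendsto_upperbound) simp
  then show ?thesis by simp
qed

lemma cis_power: "(complex_of_real r * cis t) ^ p = complex_of_real (r ^ p) * cis (real p * t)"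
  by (simp add: power_mult_distrib Complex.DeMoivre)

lemma positive_polynomial_coeff_le:
  fixes b :: "nat \<Rightarrow> complex" and A :: real and M q :: nat
  assumes b0: "b 0 = 0" and deg: "\<And>p. M < p \<Longrightarrow> b p = 0"
    and pos: "\<And>w. cmod w < 1 \<Longrightarrow> \<exists>s. (\<lambda>p. b p * w ^ p) sums s \<and> 0 \<le> A + 2 * Re s"
    and q: "1 \<le> q" "q \<le> M"
  shows "cmod (b q) \<le> A * cos (pi / (real (M div q) + 2))"
proof (rule le_of_forall_mult_power_le[where q=q])
  fix \<rho> :: real assume \<rho>: "0 < \<rho>" "\<rho> < 1"
  define L where "L = M div q + 2"
  have L: "M < q * (L - 1)"
  proof -
    have "q * (M div q) + M mod q = M" by (rule mult_div_mod_eq)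
    moreover have "M mod q < q" using q by simp
    moreover have "q * (L - 1) = q + q * (M div q)" by (simp add: L_def algebra_simps)
    ultimately show ?thesis by linarith
  qed
  have "cmod (b q * of_real (\<rho> ^ q)) \<le> A * cos (pi / L)"
  proof (rule nonneg_trig_poly_coeff_le[OF q L])
    fix \<theta> :: real
    have "cmod (of_real \<rho> * cis \<theta>) < 1" using \<rho> by (simp add: norm_mult)
    then obtain s where s: "(\<lambda>p. b p * (of_real \<rho> * cis \<theta>) ^ p) sums s" "0 \<le> A + 2 * Re s"
      using pos by blast
    have "(\<lambda>p. b p * (of_real \<rho> * cis \<theta>) ^ p) sums (\<Sum>p\<in>{1..M}. b p * (of_real \<rho> * cis \<theta>) ^ p)"
      by (rule sums_finite) (use b0 deg in \<open>auto simp: not_le Suc_le_eq\<close>)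
    with s have "s = (\<Sum>p\<in>{1..M}. b p * of_real (\<rho> ^ p) * cis (real p * \<theta>))"
      by (simp add: sums_unique2 cis_power mult.assoc)
    with s(2) show "0 \<le> A + 2 * Re (\<Sum>p\<in>{1..M}. b p * of_real (\<rho> ^ p) * cis (real p * \<theta>))"
      by simp
  qed
  then show "cmod (b q) * \<rho> ^ q \<le> A * cos (pi / (real (M div q) + 2))"
    using \<rho> by (simp add: L_def norm_mult norm_power add.commute)
qed

lemma sum_lessThan_Suc_eq_atLeast1:
  "g 0 = 0 \<Longrightarrow> (\<Sum>p<Suc N. g p) = (\<Sum>p\<in>{1..N}. (g p :: 'a::comm_monoid_add))"
  by (induction N) (auto simp: sum.lessThan_Suc)

lemma nonneg_trig_series_truncate:
  fixes c :: "nat \<Rightarrow> complex" and A :: real and P :: nat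
  assumes c0: "c 0 = 0" and sc: "summable (\<lambda>p. norm (c p))"
    and nonneg: "0 \<le> A + 2 * Re (\<Sum>p. c p * cis (real p * \<theta>))"
  shows "0 \<le> (A + 2 * (\<Sum>i. norm (c (i + Suc P)))) + 2 * Re (\<Sum>p\<in>{1..P}. c p * cis (real p * \<theta>))"
proof -
  define f where "f p = c p * cis (real p * \<theta>)" for p
  have nf: "norm (f p) = norm (c p)" for p by (simp add: f_def norm_mult)
  have sf: "summable (\<lambda>p. norm (f p))" using sc by (simp add: nf)
  have "(\<Sum>p. f p) = (\<Sum>i. f (i + Suc P)) + (\<Sum>p<Suc P. f p)"
    by (rule suminf_split_initial_segment[OF summable_norm_cancel[OF sf]])
  also have "(\<Sum>p<Suc P. f p) = (\<Sum>p\<in>{1..P}. f p)"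
    by (rule sum_lessThan_Suc_eq_atLeast1) (simp add: f_def c0)
  finally have split: "(\<Sum>p. f p) = (\<Sum>i. f (i + Suc P)) + (\<Sum>p\<in>{1..P}. f p)" .
  have "Re (\<Sum>i. f (i + Suc P)) \<le> (\<Sum>i. norm (c (i + Suc P)))"
  proof -
    have "norm (\<Sum>i. f (i + Suc P)) \<le> (\<Sum>i. norm (f (i + Suc P)))"
      by (rule summable_norm) (rule summable_ignore_initial_segment[OF sf])
    then show ?thesis using abs_Re_le_cmod[of "\<Sum>i. f (i + Suc P)"] by (simp add: nf)
  qed
  moreover have "Re (\<Sum>p. f p) = Re (\<Sum>i. f (i + Suc P)) + Re (\<Sum>p\<in>{1..P}. f p)"
    by (simp only: split plus_complex.sel)
  ultimately have "0 \<le> A + 2 * (\<Sum>i. norm (c (i + Suc P))) + 2 * Re (\<Sum>p\<in>{1..P}. f p)"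
    using nonneg unfolding f_def[symmetric] by linarith
  then show ?thesis by (simp only: f_def)
qed

lemma nonneg_trig_series_coeff_le:
  fixes c :: "nat \<Rightarrow> complex" and A :: real and q :: nat
  assumes c0: "c 0 = 0" and sc: "summable (\<lambda>p. norm (c p))"
    and nonneg: "\<And>\<theta>. 0 \<le> A + 2 * Re (\<Sum>p. c p * cis (real p * \<theta>))"
    and q: "1 \<le> q"
  shows "cmod (c q) \<le> A"
proof (rule field_le_epsilon)
  fix \<epsilon> :: real assume "0 < \<epsilon>"
  then obtain N where N: "\<forall>n\<ge>N. norm (\<Sum>i. norm (c (i + n))) < \<epsilon> / 2"
    using suminf_exist_split[OF _ sc, of "\<epsilon>/2"] by auto
  \<comment> \<open>Truncate at degree P and absorb the tail \<open>\<tau>\<close> into the constant term.\<close>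
  define L where "L = N + 3"
  define P where "P = q * (L - 1) - 1"
  have qL: "2 * q \<le> q * (L - 1)" by (simp add: L_def)
  have qP: "q \<le> P" unfolding P_def using qL q by linarith
  have PL: "P < q * (L - 1)" unfolding P_def using qL q by linarith
  have "L - 1 \<le> q * (L - 1)" using q by simp
  then have "N \<le> Suc P" by (simp add: P_def L_def)
  define \<tau> where "\<tau> = (\<Sum>i. norm (c (i + Suc P)))"
  have "0 \<le> \<tau>" unfolding \<tau>_def
    by (intro suminf_nonneg summable_ignore_initial_segment[OF sc]) simp
  then have \<tau>: "\<tau> < \<epsilon> / 2" using N \<open>N \<le> Suc P\<close> by (auto simp: \<tau>_def)
  have "cmod (c q) \<le> (A + 2 * \<tau>) * cos (pi / L)"
    using nonneg_trig_series_truncate[OF c0 sc nonneg]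
    by (intro nonneg_trig_poly_coeff_le[OF q qP PL]) (simp add: \<tau>_def)
  moreover have "0 < cos (pi / L)" using cos_pi_div_pos[of L] by (simp add: L_def)
  moreover have "cos (pi / L) \<le> 1" by simp
  ultimately have "0 \<le> A + 2 * \<tau>"
    by (metis norm_ge_zero order_trans zero_le_mult_iff linorder_not_le)
  with \<open>cos (pi / L) \<le> 1\<close> have "(A + 2 * \<tau>) * cos (pi / L) \<le> A + 2 * \<tau>"
    by (simp add: mult_left_le)
  with \<open>cmod (c q) \<le> (A + 2 * \<tau>) * cos (pi / L)\<close> have "cmod (c q) \<le> A + 2 * \<tau>" by simp
  with \<tau> show "cmod (c q) \<le> A + \<epsilon>" by linarith
qed

lemma positive_powser_coeff_le:
  fixes b :: "nat \<Rightarrow> complex" and A :: real and q :: nat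
  assumes b0: "b 0 = 0"
    and pos: "\<And>w. cmod w < 1 \<Longrightarrow> \<exists>s. (\<lambda>p. b p * w ^ p) sums s \<and> 0 \<le> A + 2 * Re s"
    and q: "1 \<le> q"
  shows "cmod (b q) \<le> A"
proof (rule le_of_forall_mult_power_le[where q=q])
  fix \<rho> :: real assume \<rho>: "0 < \<rho>" "\<rho> < 1"
  define c where "c p = b p * of_real (\<rho> ^ p)" for p
  define \<rho>' where "\<rho>' = (1 + \<rho>) / 2"
  have \<rho>': "\<rho> < \<rho>'" "\<rho>' < 1" using \<rho> by (simp_all add: \<rho>'_def)
  then have "cmod (of_real \<rho>') < 1" using \<rho> by simp
  then obtain s where "(\<lambda>p. b p * of_real \<rho>' ^ p) sums s"
    using pos by blast
  then have "summable (\<lambda>p. norm (b p * of_real \<rho> ^ p))"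
    by (intro powser_insidea[OF sums_summable]) (use \<rho> \<rho>' in auto)
  then have sc: "summable (\<lambda>p. norm (c p))" by (simp add: c_def)
  have "cmod (c q) \<le> A"
  proof (rule nonneg_trig_series_coeff_le[OF _ sc _ q])
    fix \<theta> :: real
    have "cmod (of_real \<rho> * cis \<theta>) < 1" using \<rho> by (simp add: norm_mult)
    then obtain s where s: "(\<lambda>p. b p * (of_real \<rho> * cis \<theta>) ^ p) sums s" "0 \<le> A + 2 * Re s"
      using pos by blast
    moreover have "(\<lambda>p. b p * (of_real \<rho> * cis \<theta>) ^ p) = (\<lambda>p. c p * cis (real p * \<theta>))"
      by (simp add: c_def cis_power mult.assoc)
    ultimately show "0 \<le> A + 2 * Re (\<Sum>p. c p * cis (real p * \<theta>))"
      by (simp add: sums_iff)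
  qed (simp add: c_def b0)
  then show "cmod (b q) * \<rho> ^ q \<le> A" using \<rho> by (simp add: c_def norm_mult norm_power)
qed

lemma suminf_single: "(\<Sum>i. if i = j then (x::'a::{t2_space,comm_monoid_add}) else 0) = x"
  using sums_single[of j "\<lambda>_. x"] by (simp add: sums_iff)

lemma L2_scale: "f \<in> L2 \<Longrightarrow> (\<lambda>l. c * f l) \<in> L2"
  unfolding L2_def by (simp add: norm_mult power_mult_distrib summable_mult)

lemma norm2_scale: "f \<in> L2 \<Longrightarrow> norm2 (\<lambda>l. c * f l) = cmod c * norm2 f"
  unfolding norm2_def L2_def by (simp add: norm_mult power_mult_distrib suminf_mult real_sqrt_mult)

lemma norm2_nonneg: "f \<in> L2 \<Longrightarrow> 0 \<le> norm2 f"
  unfolding norm2_def L2_def by (simp add: suminf_nonneg)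

lemma power2_norm2: "f \<in> L2 \<Longrightarrow> (norm2 f)\<^sup>2 = (\<Sum>i. (cmod (f i))\<^sup>2)"
  unfolding norm2_def L2_def by (simp add: suminf_nonneg)

lemma norm_le_norm2: "f \<in> L2 \<Longrightarrow> cmod (f j) \<le> norm2 f"
  unfolding norm2_def L2_def
  by (intro real_le_rsqrt) (use sum_le_suminf[of "\<lambda>i. (cmod (f i))\<^sup>2" "{j}"] in simp)

lemma power2_norm_basis2: "(\<lambda>i. (cmod (basis2 j i))\<^sup>2) = (\<lambda>i. if i = j then 1 else 0)"
  by (auto simp: basis2_def)

lemma basis2_L2: "basis2 j \<in> L2"
  unfolding L2_def mem_Collect_eq power2_norm_basis2
  using sums_single[of j "\<lambda>_. 1::real"] by (rule sums_summable)

lemma norm2_basis2: "norm2 (basis2 j) = 1"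
  unfolding norm2_def power2_norm_basis2 by (simp add: suminf_single)

lemma inner2_basis2: "inner2 f (basis2 j) = f j"
proof -
  have "(\<lambda>i. f i * cnj (basis2 j i)) = (\<lambda>i. if i = j then f j else 0)"
    by (auto simp: basis2_def)
  then show ?thesis unfolding inner2_def by (simp add: suminf_single)
qed

lemma L2_diff:
  assumes "f \<in> L2" "g \<in> L2"
  shows "(\<lambda>l. f l - g l) \<in> L2"
    and "(norm2 (\<lambda>l. f l - g l))\<^sup>2 \<le> 2 * (norm2 f)\<^sup>2 + 2 * (norm2 g)\<^sup>2"
proof -
  have sq: "(cmod (x - y))\<^sup>2 \<le> 2 * (cmod x)\<^sup>2 + 2 * (cmod y)\<^sup>2" for x y :: complex
  proof -
    have "(cmod (x - y))\<^sup>2 \<le> (cmod x + cmod y)\<^sup>2"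
      by (intro power_mono norm_triangle_ineq4) simp
    also have "\<dots> \<le> 2 * (cmod x)\<^sup>2 + 2 * (cmod y)\<^sup>2"
      using sum_squares_ge_zero[of "cmod x - cmod y" 0] by (simp add: power2_eq_square algebra_simps)
    finally show ?thesis .
  qed
  have sf: "summable (\<lambda>i. (cmod (f i))\<^sup>2)" and sg: "summable (\<lambda>i. (cmod (g i))\<^sup>2)"
    using assms by (auto simp: L2_def)
  have s2: "summable (\<lambda>i. 2 * (cmod (f i))\<^sup>2 + 2 * (cmod (g i))\<^sup>2)"
    using sf sg by (intro summable_add summable_mult)
  have s: "summable (\<lambda>i. (cmod (f i - g i))\<^sup>2)"
    by (rule summable_comparison_test[OF _ s2]) (auto intro!: exI[of _ 0] sq)
  then show "(\<lambda>l. f l - g l) \<in> L2" by (simp add: L2_def)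
  have "(\<Sum>i. (cmod (f i - g i))\<^sup>2) \<le> (\<Sum>i. 2 * (cmod (f i))\<^sup>2 + 2 * (cmod (g i))\<^sup>2)"
    by (rule suminf_le[OF sq s s2])
  also have "\<dots> = 2 * (\<Sum>i. (cmod (f i))\<^sup>2) + 2 * (\<Sum>i. (cmod (g i))\<^sup>2)"
    using sf sg by (simp add: suminf_add[symmetric] suminf_mult summable_mult)
  finally show "(norm2 (\<lambda>l. f l - g l))\<^sup>2 \<le> 2 * (norm2 f)\<^sup>2 + 2 * (norm2 g)\<^sup>2"
    using assms \<open>(\<lambda>l. f l - g l) \<in> L2\<close> by (simp add: power2_norm2)
qed

lemma norm2_le_opnorm:
  assumes "\<forall>f\<in>L2. norm2 f \<le> 1 \<longrightarrow> norm2 (T f) \<le> C" "f \<in> L2" "norm2 f \<le> 1"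
  shows "norm2 (T f) \<le> opnorm T"
  unfolding opnorm_def
  by (rule cSup_upper) (use assms in \<open>auto intro!: bdd_aboveI[where M=C]\<close>)

definition scalar_op :: "complex \<Rightarrow> op" where
  "scalar_op c = (\<lambda>h l. c * h l)"

lemma bop_scalar_op: "bop (scalar_op c)"
  unfolding bop_def scalar_op_def
proof (intro conjI ballI allI)
  show "\<exists>C. \<forall>f\<in>L2. norm2 (\<lambda>l. c * f l) \<le> C * norm2 f"
    by (rule exI[of _ "cmod c"]) (simp add: norm2_scale)
qed (auto simp: L2_scale algebra_simps)

lemma adj_scalar_op: "adj (scalar_op c) h = (\<lambda>l. cnj c * h l)"
proof
  fix l
  have "(\<lambda>i. h i * cnj (c * basis2 l i)) = (\<lambda>i. if i = l then cnj c * h l else 0)"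
    by (auto simp: basis2_def)
  then show "adj (scalar_op c) h l = cnj c * h l"
    unfolding adj_def scalar_op_def by (simp add: suminf_single)
qed

lemma opnorm_scalar_op_le: "opnorm (scalar_op c) \<le> cmod c"
  unfolding opnorm_def scalar_op_def
proof (rule cSup_least)
  show "{norm2 (\<lambda>l. c * f l) |f. f \<in> L2 \<and> norm2 f \<le> 1} \<noteq> {}"
    using basis2_L2 norm2_basis2 by fastforce
next
  fix x assume "x \<in> {norm2 (\<lambda>l. c * f l) |f. f \<in> L2 \<and> norm2 f \<le> 1}"
  then obtain f where f: "f \<in> L2" "norm2 f \<le> 1" "x = norm2 (\<lambda>l. c * f l)" by auto
  then show "x \<le> cmod c" by (simp add: norm2_scale mult_left_le)
qed

lemma positive_scalar_op: "0 \<le> d \<Longrightarrow> positive_op (scalar_op (of_real d))"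
  unfolding positive_op_def
proof (intro ballI conjI)
  fix h assume h: "h \<in> L2" and d: "0 \<le> d"
  have e: "(\<lambda>i. scalar_op (of_real d) h i * cnj (h i)) = (\<lambda>i. of_real (d * (cmod (h i))\<^sup>2))"
    by (auto simp: scalar_op_def complex_norm_square[symmetric] mult_ac)
  have s: "summable (\<lambda>i. d * (cmod (h i))\<^sup>2)" using h unfolding L2_def by (intro summable_mult) simp
  have eq: "inner2 (scalar_op (of_real d) h) h = of_real (\<Sum>i. d * (cmod (h i))\<^sup>2)"
    unfolding inner2_def e by (rule suminf_of_real[OF s, symmetric])
  show "inner2 (scalar_op (of_real d) h) h \<in> \<real>" unfolding eq by simp
  show "0 \<le> Re (inner2 (scalar_op (of_real d) h) h)" unfolding eq using s d
    by (simp add: suminf_nonneg)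
qed

lemma invertible_scalar_op: "d \<noteq> 0 \<Longrightarrow> invertible_op (scalar_op d)"
  unfolding invertible_op_def
  by (intro conjI bop_scalar_op exI[of _ "scalar_op (1/d)"]) (auto simp: scalar_op_def)

lemma scalar_op_apply: "scalar_op c h l = c * h l"
  by (simp add: scalar_op_def)

lemma scalar_op_one: "scalar_op 1 = id"
  by (auto simp: scalar_op_def)

lemma scalar_op_comp: "scalar_op a \<circ> scalar_op b = scalar_op (a * b)"
  by (auto simp: scalar_op_def mult.assoc)

definition row_sqnorm :: "(nat \<Rightarrow> nat) \<Rightarrow> (nat \<Rightarrow> nat \<Rightarrow> complex) \<Rightarrow> nat \<Rightarrow> real" where
  "row_sqnorm n z i = (\<Sum>j<n i. (cmod (z i j))\<^sup>2)"

abbreviation scalar_tuple :: "(nat \<Rightarrow> nat \<Rightarrow> complex) \<Rightarrow> nat \<Rightarrow> nat \<Rightarrow> op" where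
  "scalar_tuple z \<equiv> (\<lambda>i j. scalar_op (z i j))"

lemma mult_mult_cnj: "z * (cnj z * h) = complex_of_real ((cmod z)\<^sup>2) * h"
  by (metis complex_norm_square mult.assoc)

lemma row_sum_scalar_op:
  "(\<lambda>h l. \<Sum>j<n i. scalar_op (z i j) (adj (scalar_op (z i j)) h) l) = scalar_op (of_real (row_sqnorm n z i))"
proof (intro ext)
  fix h l
  have "(\<Sum>j<n i. scalar_op (z i j) (adj (scalar_op (z i j)) h) l) = (\<Sum>j<n i. of_real ((cmod (z i j))\<^sup>2) * h l)"
    by (intro sum.cong refl) (simp only: adj_scalar_op scalar_op_apply mult_mult_cnj)
  then show "(\<Sum>j<n i. scalar_op (z i j) (adj (scalar_op (z i j)) h) l) = scalar_op (of_real (row_sqnorm n z i)) h l"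
    by (simp add: scalar_op_def row_sqnorm_def sum_distrib_right)
qed

lemma Phi_scalar_op:
  "Phi (n i) (scalar_tuple z) i (scalar_op d) = scalar_op (d * of_real (row_sqnorm n z i))"
proof (intro ext)
  fix h l
  have "Phi (n i) (scalar_tuple z) i (scalar_op d) h l = (\<Sum>j<n i. d * (of_real ((cmod (z i j))\<^sup>2) * h l))"
    unfolding Phi_def
    by (intro sum.cong refl) (simp only: adj_scalar_op scalar_op_apply mult_mult_cnj mult.left_commute[of _ d])
  then show "Phi (n i) (scalar_tuple z) i (scalar_op d) h l = scalar_op (d * of_real (row_sqnorm n z i)) h l"
    by (simp add: scalar_op_def row_sqnorm_def sum_distrib_right sum_distrib_left mult_ac)
qed

lemma Delta_scalar_tuple:
  assumes "\<forall>i\<in>set xs. row_sqnorm n z i < 1"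
  shows "\<exists>d>0. foldr (\<lambda>i D Y. (\<lambda>h l. D Y h l - Phi (n i) (scalar_tuple z) i (D Y) h l)) xs (\<lambda>Y. Y) id
           = scalar_op (of_real d)"
  using assms
proof (induction xs)
  case Nil
  show ?case by (intro exI[of _ 1]) (simp add: scalar_op_one)
next
  case (Cons i xs)
  have "\<forall>i\<in>set xs. row_sqnorm n z i < 1" using Cons.prems by simp
  then obtain d where d: "0 < d" "foldr (\<lambda>i D Y. (\<lambda>h l. D Y h l - Phi (n i) (scalar_tuple z) i (D Y) h l)) xs (\<lambda>Y. Y) id
      = scalar_op (of_real d)" using Cons.IH by blast
  have "foldr (\<lambda>i D Y. (\<lambda>h l. D Y h l - Phi (n i) (scalar_tuple z) i (D Y) h l)) (i # xs) (\<lambda>Y. Y) id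
      = (\<lambda>h l. scalar_op (of_real d) h l - Phi (n i) (scalar_tuple z) i (scalar_op (of_real d)) h l)"
    by (simp only: foldr_Cons o_apply d(2))
  also have "\<dots> = scalar_op (of_real (d * (1 - row_sqnorm n z i)))"
    unfolding Phi_scalar_op by (auto simp: scalar_op_def algebra_simps)
  finally have "foldr (\<lambda>i D Y. (\<lambda>h l. D Y h l - Phi (n i) (scalar_tuple z) i (D Y) h l)) (i # xs) (\<lambda>Y. Y) id
      = scalar_op (of_real (d * (1 - row_sqnorm n z i)))" .
  moreover have "0 < d * (1 - row_sqnorm n z i)" using d Cons.prems by simp
  ultimately show ?case by blast
qed

lemma in_polyball_scalar_tuple:
  assumes "\<forall>i<k. row_sqnorm n z i < 1"
  shows "in_polyball k n (scalar_tuple z)"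
proof -
  obtain d where d: "0 < d" "Delta k n (scalar_tuple z) id = scalar_op (of_real d)"
    using Delta_scalar_tuple[of "[0..<k]" n z] assms unfolding Delta_def by auto
  have "opnorm (\<lambda>h l. \<Sum>j<n i. scalar_op (z i j) (adj (scalar_op (z i j)) h) l) < 1" if "i < k" for i
  proof -
    have "0 \<le> row_sqnorm n z i" by (simp add: row_sqnorm_def sum_nonneg)
    then have "opnorm (scalar_op (of_real (row_sqnorm n z i))) \<le> row_sqnorm n z i"
      using opnorm_scalar_op_le[of "of_real (row_sqnorm n z i)"] by simp
    then show ?thesis unfolding row_sum_scalar_op using assms that by fastforce
  qed
  then show ?thesis unfolding in_polyball_def using d
    by (auto simp: bop_scalar_op scalar_op_apply positive_scalar_op invertible_scalar_op)
qed

lemma X_word_scalar_tuple: "X_word (scalar_tuple z) i w = scalar_op (prod_list (map (z i) w))"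
  by (induction w) (simp_all add: X_word_def scalar_op_one scalar_op_comp)

lemma X_multi_scalar_tuple: "X_multi k (scalar_tuple z) \<alpha> = scalar_op (lam_multi k z \<alpha>)"
proof -
  have "foldr (\<lambda>i T. X_word (scalar_tuple z) i (\<alpha> i) \<circ> T) xs id
      = scalar_op (prod_list (map (\<lambda>i. prod_list (map (z i) (\<alpha> i))) xs))" for xs
  proof (induction xs)
    case (Cons i xs)
    have "(\<lambda>x. scalar_op a (scalar_op b x)) = scalar_op (a * b)" for a b
      by (auto simp: scalar_op_def mult.assoc)
    with Cons show ?case by (simp add: X_word_scalar_tuple)
  qed (simp add: scalar_op_one)
  moreover have "prod_list (map (\<lambda>i. prod_list (map (z i) (\<alpha> i))) [0..<k]) = lam_multi k z \<alpha>"
    unfolding lam_multi_def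
    by (subst prod.distinct_set_conv_list[symmetric]) (auto simp: atLeast0LessThan)
  ultimately show ?thesis unfolding X_multi_def by simp
qed

definition hom_part :: "nat \<Rightarrow> (nat \<Rightarrow> nat) \<Rightarrow> ((nat \<Rightarrow> nat list) \<Rightarrow> complex) \<Rightarrow> nat \<Rightarrow> (nat \<Rightarrow> nat \<Rightarrow> complex) \<Rightarrow> complex" where
  "hom_part k n a q z = (\<Sum>\<alpha>\<in>Gamma k n q. a \<alpha> * lam_multi k z \<alpha>)"

lemma P_op_scalar_tuple: "P_op k n a (scalar_tuple z) q = scalar_op (hom_part k n a q z)"
  unfolding P_op_def hom_part_def X_multi_scalar_tuple
  by (auto simp: scalar_op_def sum_distrib_right mult.assoc)

lemma hom_part_scale: "hom_part k n a q (\<lambda>i j. w * z i j) = w ^ q * hom_part k n a q z"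
proof -
  have "prod_list (map (\<lambda>j. w * z i j) xs) = w ^ length xs * prod_list (map (z i) xs)" for i xs
    by (induction xs) (auto simp: mult_ac)
  then have "lam_multi k (\<lambda>i j. w * z i j) \<alpha> = w ^ (\<Sum>i<k. length (\<alpha> i)) * lam_multi k z \<alpha>" for \<alpha>
    unfolding lam_multi_def by (simp add: prod.distrib power_sum)
  then show ?thesis
    unfolding hom_part_def by (auto simp: Gamma_def sum_distrib_left mult_ac intro!: sum.cong)
qed

definition series_coeff :: "nat \<Rightarrow> (nat \<Rightarrow> nat) \<Rightarrow> ((nat \<Rightarrow> nat list) \<Rightarrow> complex) \<Rightarrow> enat
    \<Rightarrow> (nat \<Rightarrow> nat \<Rightarrow> complex) \<Rightarrow> nat \<Rightarrow> complex" where
  "series_coeff k n a m z p = (if p \<noteq> 0 \<and> enat p \<le> m then hom_part k n a p z else 0)"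

lemma series_coeff_scale:
  "series_coeff k n a m (\<lambda>i j. w * z i j) p = series_coeff k n a m z p * w ^ p"
  by (simp add: series_coeff_def hom_part_scale mult.commute)

lemma positive_g_op_entry:
  assumes "positive_op (g_op a0 S)"
  shows "0 \<le> a0 + 2 * Re (S (basis2 0) 0)"
proof -
  have "(\<lambda>i. basis2 0 i * cnj (S (basis2 0) i)) = (\<lambda>i. if i = 0 then cnj (S (basis2 0) 0) else 0)"
    by (auto simp: basis2_def)
  then have "adj S (basis2 0) 0 = cnj (S (basis2 0) 0)"
    unfolding adj_def by (simp add: suminf_single)
  then have "inner2 (g_op a0 S (basis2 0)) (basis2 0) = cnj (S (basis2 0) 0) + of_real a0 + S (basis2 0) 0"
    unfolding inner2_basis2 g_op_def by (simp add: basis2_def)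
  then show ?thesis using assms basis2_L2[of 0] unfolding positive_op_def by force
qed

lemma tendsto_entry_of_opnorm_tendsto:
  assumes S: "bop S"
    and lim: "(\<lambda>N. opnorm (\<lambda>h l. s N * h l - S h l)) \<longlonglongrightarrow> 0"
  shows "s \<longlonglongrightarrow> S (basis2 0) 0"
proof -
  obtain C where C: "\<forall>f\<in>L2. norm2 (S f) \<le> C * norm2 f" and SL2: "\<forall>f\<in>L2. S f \<in> L2"
    using S unfolding bop_def by blast
  define D where "D N = (\<lambda>h l. s N * h l - S h l)" for N
  have bound: "\<forall>f\<in>L2. norm2 f \<le> 1 \<longrightarrow> norm2 (D N f) \<le> sqrt (2 * (cmod (s N))\<^sup>2 + 2 * C\<^sup>2)" for N
  proof (intro ballI impI)
    fix f assume f: "f \<in> L2" "norm2 f \<le> 1"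
    have "norm2 (\<lambda>l. s N * f l) \<le> cmod (s N)"
      using f norm2_nonneg[of f] by (simp add: norm2_scale mult_left_le)
    then have scaled: "(norm2 (\<lambda>l. s N * f l))\<^sup>2 \<le> (cmod (s N))\<^sup>2"
      by (rule power_mono[OF _ norm2_nonneg[OF L2_scale[OF f(1)]]])
    have Sf: "S f \<in> L2" using SL2 f by blast
    have "norm2 (S f) \<le> C * norm2 f" using C f by blast
    also have "\<dots> \<le> \<bar>C\<bar> * 1" using f(2) norm2_nonneg[OF f(1)] by (intro mult_mono) simp_all
    finally have "norm2 (S f) \<le> \<bar>C\<bar>" by simp
    from power_mono[OF this norm2_nonneg[OF Sf], of 2]
    have image: "(norm2 (S f))\<^sup>2 \<le> C\<^sup>2" by simp
    have "(norm2 (D N f))\<^sup>2 \<le> 2 * (norm2 (\<lambda>l. s N * f l))\<^sup>2 + 2 * (norm2 (S f))\<^sup>2"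
      unfolding D_def by (rule L2_diff(2)[OF L2_scale[OF f(1)] Sf])
    then have "(norm2 (D N f))\<^sup>2 \<le> 2 * (cmod (s N))\<^sup>2 + 2 * C\<^sup>2"
      using scaled image by linarith
    then show "norm2 (D N f) \<le> sqrt (2 * (cmod (s N))\<^sup>2 + 2 * C\<^sup>2)"
      by (rule real_le_rsqrt)
  qed
  have entry: "norm (s N - S (basis2 0) 0) \<le> opnorm (D N)" for N
  proof -
    have "D N (basis2 0) \<in> L2"
      unfolding D_def by (rule L2_diff(1)[OF L2_scale[OF basis2_L2]]) (use SL2 basis2_L2 in blast)
    then have "cmod (D N (basis2 0) 0) \<le> norm2 (D N (basis2 0))" by (rule norm_le_norm2)
    also have "\<dots> \<le> opnorm (D N)"
      using norm2_le_opnorm[OF bound[of N] basis2_L2] by (simp add: norm2_basis2)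
    finally show ?thesis by (simp add: D_def basis2_def)
  qed
  have "(\<lambda>N. opnorm (D N)) \<longlonglongrightarrow> 0" using lim by (simp add: D_def)
  then have "(\<lambda>N. s N - S (basis2 0) 0) \<longlonglongrightarrow> 0"
    by (rule Lim_null_comparison[OF always_eventually[OF allI[OF entry]]])
  then show ?thesis by (simp add: LIM_zero_iff)
qed

lemma row_sqnorm_scale_lt:
  assumes "z \<in> cpolyball k n" "cmod w < 1"
  shows "\<forall>i<k. row_sqnorm n (\<lambda>i j. w * z i j) i < 1"
proof (intro allI impI)
  fix i assume "i < k"
  then have "(cmod w)\<^sup>2 * row_sqnorm n z i \<le> (cmod w)\<^sup>2 * 1"
    using assms(1) by (intro mult_left_mono) (simp_all add: cpolyball_def row_sqnorm_def)
  also have "\<dots> < 1" using assms(2) by (simp add: power_less_one_iff abs_square_less_1)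
  finally show "row_sqnorm n (\<lambda>i j. w * z i j) i < 1"
    by (simp add: row_sqnorm_def norm_mult power_mult_distrib sum_distrib_left)
qed

definition single_letter :: "nat \<Rightarrow> nat \<Rightarrow> nat \<Rightarrow> nat list" where
  "single_letter i j = (\<lambda>i'. if i' = i then [j] else [])"

lemma Gamma_one_eq: "Gamma k n 1 = (\<lambda>(i, j). single_letter i j) ` (SIGMA i:{..<k}. {..<n i})"
proof (intro set_eqI iffI)
  fix \<alpha> assume "\<alpha> \<in> Gamma k n 1"
  then have out: "\<forall>i. k \<le> i \<longrightarrow> \<alpha> i = []" and letters: "\<forall>i<k. set (\<alpha> i) \<subseteq> {..<n i}"
    and len: "(\<Sum>i<k. length (\<alpha> i)) = 1" by (auto simp: Gamma_def)
  obtain i0 where i0: "i0 < k" "\<alpha> i0 \<noteq> []"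
    using len by (metis (no_types, lifting) length_0_conv sum.neutral lessThan_iff zero_neq_one)
  have "(\<Sum>i<k. length (\<alpha> i)) = length (\<alpha> i0) + (\<Sum>i\<in>{..<k}-{i0}. length (\<alpha> i))"
    using i0 by (simp add: sum.remove)
  then have l1: "length (\<alpha> i0) = 1" and rest: "(\<Sum>i\<in>{..<k}-{i0}. length (\<alpha> i)) = 0"
    using len i0(2) by (cases "\<alpha> i0"; simp)+
  obtain j where j: "\<alpha> i0 = [j]" using l1 by (cases "\<alpha> i0") auto
  have "\<alpha> i = []" if "i \<noteq> i0" for i
    using rest that out by (cases "i < k") (simp_all add: sum_eq_0_iff)
  then have "\<alpha> = single_letter i0 j" using j by (auto simp: single_letter_def)
  moreover have "j < n i0" using letters i0 j by auto
  ultimately show "\<alpha> \<in> (\<lambda>(i, j). single_letter i j) ` (SIGMA i:{..<k}. {..<n i})"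
    using i0 by blast
next
  fix \<alpha> assume "\<alpha> \<in> (\<lambda>(i, j). single_letter i j) ` (SIGMA i:{..<k}. {..<n i})"
  then obtain i j where ij: "i < k" "j < n i" "\<alpha> = single_letter i j" by auto
  have "(\<Sum>i'<k. length (single_letter i j i')) = (\<Sum>i'<k. if i' = i then 1 else 0)"
    by (intro sum.cong) (auto simp: single_letter_def)
  then show "\<alpha> \<in> Gamma k n 1" using ij by (auto simp: Gamma_def single_letter_def)
qed

lemma inj_on_single_letter: "inj_on (\<lambda>(i, j). single_letter i j) A"
  unfolding inj_on_def single_letter_def by (auto dest!: fun_cong split: if_splits)

lemma lam_multi_single_letter: "i < k \<Longrightarrow> lam_multi k z (single_letter i j) = z i j"
  unfolding lam_multi_def single_letter_def
  by (simp add: prod.If_cases Int_absorb1 if_distrib[of "\<lambda>x. prod_list (map _ x)"])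

lemma hom_part_one: "hom_part k n a 1 z = (\<Sum>i<k. \<Sum>j<n i. a (single_letter i j) * z i j)"
  unfolding hom_part_def Gamma_one_eq sum.reindex[OF inj_on_single_letter]
  by (subst sum.Sigma) (auto intro!: sum.cong simp: lam_multi_single_letter)

definition coord_point :: "nat \<Rightarrow> nat \<Rightarrow> complex \<Rightarrow> nat \<Rightarrow> nat \<Rightarrow> complex" where
  "coord_point i j t = (\<lambda>i' j'. if i' = i \<and> j' = j then t else 0)"

lemma coord_point_scale: "coord_point i j t = (\<lambda>i' j'. t * coord_point i j 1 i' j')"
  by (auto simp: coord_point_def fun_eq_iff)

lemma coord_point_cpolyball: "coord_point i j 1 \<in> cpolyball k n"
  unfolding cpolyball_def
proof (intro CollectI allI impI)
  fix i' assume "i' < k"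
  have "(\<Sum>j'<n i'. (cmod (coord_point i j 1 i' j'))\<^sup>2) = (\<Sum>j'<n i'. if i' = i \<and> j' = j then 1 else 0)"
    by (intro sum.cong) (auto simp: coord_point_def)
  also have "\<dots> \<le> 1" by (cases "i' = i") auto
  finally show "(\<Sum>j'<n i'. (cmod (coord_point i j 1 i' j'))\<^sup>2) \<le> 1" .
qed

lemma hom_part_one_coord_point:
  assumes "i < k" "j < n i"
  shows "hom_part k n a 1 (coord_point i j 1) = a (single_letter i j)"
proof -
  have "(\<Sum>j'<n i'. a (single_letter i' j') * coord_point i j 1 i' j') = (if i' = i then a (single_letter i j) else 0)" for i'
  proof -
    have "(\<Sum>j'<n i'. a (single_letter i' j') * coord_point i j 1 i' j')
        = (\<Sum>j'<n i'. if i' = i \<and> j' = j then a (single_letter i j) else 0)"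
      by (intro sum.cong) (auto simp: coord_point_def)
    then show ?thesis using assms(2) by (cases "i' = i") auto
  qed
  then show ?thesis unfolding hom_part_one using assms(1) by simp
qed

definition series_value :: "nat \<Rightarrow> (nat \<Rightarrow> nat) \<Rightarrow> ((nat \<Rightarrow> nat list) \<Rightarrow> complex) \<Rightarrow> enat
    \<Rightarrow> (nat \<Rightarrow> nat \<Rightarrow> complex) \<Rightarrow> complex" where
  "series_value k n a m z = (case m of enat M \<Rightarrow> (\<Sum>q\<in>{1..M}. hom_part k n a q z)
     | \<infinity> \<Rightarrow> (\<Sum>q. hom_part k n a (Suc q) z))"

lemma g_scalar_eq: "g_scalar k n a a0 m z = cnj (series_value k n a m z) + of_real a0 + series_value k n a m z"
  unfolding g_scalar_def series_value_def hom_part_def Let_def ..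

lemma series_value_eq:
  assumes "series_coeff k n a m z sums s"
  shows "series_value k n a m z = s"
proof (cases m)
  case (enat M)
  have "series_coeff k n a m z sums (\<Sum>q\<in>{1..M}. series_coeff k n a m z q)"
    by (rule sums_finite) (auto simp: series_coeff_def enat)
  then have "s = (\<Sum>q\<in>{1..M}. series_coeff k n a m z q)" using assms by (rule sums_unique2[symmetric])
  also have "\<dots> = series_value k n a m z"
    by (simp add: series_value_def series_coeff_def enat)
  finally show ?thesis ..
next
  case infinity
  have "(\<Sum>q. series_coeff k n a m z (Suc q)) = s - series_coeff k n a m z 0"
    using suminf_split_head[OF sums_summable[OF assms]] assms by (simp add: sums_iff)
  then show ?thesis by (simp add: series_value_def series_coeff_def infinity)
qed

lemma has_field_derivative_powser_at_0:
  fixes c :: "nat \<Rightarrow> complex"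
  assumes "\<And>t. cmod t < 1 \<Longrightarrow> (\<lambda>p. c p * t ^ p) sums f t"
  shows "(f has_field_derivative c 1) (at 0)"
proof -
  have "((\<lambda>t. \<Sum>p. c p * t ^ p) has_field_derivative (\<Sum>p. diffs c p * 0 ^ p)) (at 0)"
    by (rule termdiffs_strong'[of 1]) (auto intro: sums_summable[OF assms])
  then have "((\<lambda>t. \<Sum>p. c p * t ^ p) has_field_derivative c 1) (at 0)"
    by (simp add: diffs_def)
  then show ?thesis
  proof (rule has_field_derivative_transform_within_open[of _ _ _ "ball 0 1"])
    show "(\<Sum>p. c p * t ^ p) = f t" if "t \<in> ball 0 1" for t
      using assms[of t] that by (simp add: sums_iff)
  qed auto
qed

lemma wirtinger_cnj_add:
  assumes D: "(s has_field_derivative D) (at 0)"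
  shows "wirtinger (\<lambda>t. cnj (s t) + of_real a0 + s t) 0 = D"
proof -
  have c1: "((\<lambda>x::real. 0 + of_real x :: complex) has_vector_derivative 1) (at 0)"
    by (auto intro!: derivative_eq_intros)
  have "(s has_field_derivative D) (at (0 + of_real (0::real)))" using D by simp
  from field_vector_diff_chain_at[OF c1 this]
  have s1: "((\<lambda>x::real. s (0 + of_real x)) has_vector_derivative D) (at 0)"
    by (simp add: o_def)
  have c2: "((\<lambda>x::real. 0 + \<i> * of_real x :: complex) has_vector_derivative \<i>) (at 0)"
    by (auto intro!: derivative_eq_intros)
  have "(s has_field_derivative D) (at (0 + \<i> * of_real (0::real)))" using D by simp
  from field_vector_diff_chain_at[OF c2 this]
  have s2: "((\<lambda>x::real. s (0 + \<i> * of_real x)) has_vector_derivative \<i> * D) (at 0)"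
    by (simp add: o_def)
  have v1: "((\<lambda>x::real. cnj (s (0 + of_real x)) + of_real a0 + s (0 + of_real x)) has_vector_derivative
      (cnj D + 0 + D)) (at 0)"
    by (intro has_vector_derivative_add has_vector_derivative_cnj s1 has_vector_derivative_const)
  have v2: "((\<lambda>x::real. cnj (s (0 + \<i> * of_real x)) + of_real a0 + s (0 + \<i> * of_real x)) has_vector_derivative
      (cnj (\<i> * D) + 0 + \<i> * D)) (at 0)"
    by (intro has_vector_derivative_add has_vector_derivative_cnj s2 has_vector_derivative_const)
  show ?thesis unfolding wirtinger_def
    using vector_derivative_at[OF v1] vector_derivative_at[OF v2]
    by (simp add: algebra_simps complex_eq_iff)
qed

locale positive_pluriharmonic =
  fixes k :: nat and n :: "nat \<Rightarrow> nat" and a :: "(nat \<Rightarrow> nat list) \<Rightarrow> complex"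
    and m :: enat and a0 :: real
  assumes conv: "\<forall>X. in_polyball k n X \<longrightarrow> (\<exists>S. bop S \<and> series_limit k n a m X S)"
    and pos: "\<forall>X S. in_polyball k n X \<and> bop S \<and> series_limit k n a m X S
                 \<longrightarrow> positive_op (g_op a0 S)"
begin

lemma scalar_series_positive:
  assumes z: "\<forall>i<k. row_sqnorm n z i < 1"
  shows "\<exists>s. series_coeff k n a m z sums s \<and> 0 \<le> a0 + 2 * Re s"
proof -
  have X: "in_polyball k n (scalar_tuple z)" by (rule in_polyball_scalar_tuple[OF z])
  then obtain S where S: "bop S" "series_limit k n a m (scalar_tuple z) S" using conv by blast
  have "series_coeff k n a m z sums S (basis2 0) 0"
  proof (cases m)
    case (enat M)
    have "S (basis2 0) 0 = (\<Sum>q\<in>{1..M}. P_op k n a (scalar_tuple z) q (basis2 0) 0)"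
      using S(2) basis2_L2[of 0] unfolding series_limit_def enat by simp
    also have "\<dots> = (\<Sum>q\<in>{1..M}. series_coeff k n a m z q)"
      by (intro sum.cong refl) (simp add: P_op_scalar_tuple scalar_op_apply basis2_def series_coeff_def enat)
    finally have "S (basis2 0) 0 = (\<Sum>q\<in>{1..M}. series_coeff k n a m z q)" .
    moreover have "series_coeff k n a m z sums (\<Sum>q\<in>{1..M}. series_coeff k n a m z q)"
      by (rule sums_finite) (auto simp: series_coeff_def enat)
    ultimately show ?thesis by simp
  next
    case infinity
    define s where "s N = (\<Sum>q\<in>{1..N}. hom_part k n a q z)" for N
    have partial: "(\<lambda>h l. (\<Sum>q\<in>{1..N}. P_op k n a (scalar_tuple z) q h l) - S h l) = (\<lambda>h l. s N * h l - S h l)" for N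
      by (simp add: s_def P_op_scalar_tuple scalar_op_apply sum_distrib_right)
    have "(\<lambda>N. opnorm (\<lambda>h l. s N * h l - S h l)) \<longlonglongrightarrow> 0"
      using S(2) unfolding series_limit_def infinity partial by simp
    then have "s \<longlonglongrightarrow> S (basis2 0) 0" by (rule tendsto_entry_of_opnorm_tendsto[OF S(1)])
    moreover have "(\<lambda>N. \<Sum>p<Suc N. series_coeff k n a m z p) = s"
    proof
      fix N
      have "(\<Sum>p<Suc N. series_coeff k n a m z p) = (\<Sum>p\<in>{1..N}. series_coeff k n a m z p)"
        by (rule sum_lessThan_Suc_eq_atLeast1) (simp add: series_coeff_def)
      also have "\<dots> = s N"
        unfolding s_def by (intro sum.cong refl) (simp add: series_coeff_def infinity)
      finally show "(\<Sum>p<Suc N. series_coeff k n a m z p) = s N" .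
    qed
    ultimately have "(\<lambda>N. \<Sum>p<Suc N. series_coeff k n a m z p) \<longlonglongrightarrow> S (basis2 0) 0" by simp
    then show ?thesis unfolding sums_def by (rule LIMSEQ_imp_Suc)
  qed
  moreover have "0 \<le> a0 + 2 * Re (S (basis2 0) 0)"
    using pos X S by (intro positive_g_op_entry) blast
  ultimately show ?thesis by blast
qed

lemma hom_part_bound:
  assumes z: "z \<in> cpolyball k n" and q: "1 \<le> q" "enat q \<le> m"
  shows "cmod (hom_part k n a q z) \<le> a0 * cos_bound m q"
proof -
  define b where "b = series_coeff k n a m z"
  have b0: "b 0 = 0" by (simp add: b_def series_coeff_def)
  have b_pos: "\<exists>s. (\<lambda>p. b p * w ^ p) sums s \<and> 0 \<le> a0 + 2 * Re s" if "cmod w < 1" for w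
  proof -
    have "series_coeff k n a m (\<lambda>i j. w * z i j) = (\<lambda>p. b p * w ^ p)"
      by (rule ext) (simp add: b_def series_coeff_scale)
    then show ?thesis using scalar_series_positive[OF row_sqnorm_scale_lt[OF z that]] by simp
  qed
  have bq: "b q = hom_part k n a q z" using q by (simp add: b_def series_coeff_def)
  show ?thesis
  proof (cases m)
    case (enat M)
    have "cmod (b q) \<le> a0 * cos (pi / (real (M div q) + 2))"
      by (rule positive_polynomial_coeff_le[OF b0 _ b_pos q(1)]) (use q in \<open>simp_all add: b_def series_coeff_def enat\<close>)
    then show ?thesis by (simp add: bq cos_bound_def enat)
  next
    case infinity
    have "cmod (b q) \<le> a0" by (rule positive_powser_coeff_le[OF b0 b_pos q(1)])
    then show ?thesis by (simp add: bq cos_bound_def infinity)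
  qed
qed

lemma pderiv_at0_g_scalar:
  assumes ij: "i < k" "j < n i"
  shows "pderiv_at0 (g_scalar k n a a0 m) i j = (if m = 0 then 0 else a (single_letter i j))"
proof -
  define f where "f t = series_value k n a m (coord_point i j t)" for t
  define c where "c = series_coeff k n a m (coord_point i j 1)"
  have "(\<lambda>p. c p * t ^ p) sums f t" if t: "cmod t < 1" for t
  proof -
    have scale: "coord_point i j t = (\<lambda>i' j'. t * coord_point i j 1 i' j')"
      by (rule coord_point_scale)
    obtain s where "series_coeff k n a m (coord_point i j t) sums s"
      using scalar_series_positive[OF row_sqnorm_scale_lt[OF coord_point_cpolyball t]]
      unfolding scale by blast
    moreover have "series_coeff k n a m (coord_point i j t) = (\<lambda>p. c p * t ^ p)"
      unfolding scale by (simp add: c_def series_coeff_scale fun_eq_iff)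
    ultimately show ?thesis by (simp add: f_def series_value_eq)
  qed
  then have "(f has_field_derivative c 1) (at 0)" by (rule has_field_derivative_powser_at_0)
  then have "pderiv_at0 (g_scalar k n a a0 m) i j = c 1"
    unfolding pderiv_at0_def g_scalar_eq f_def coord_point_def[symmetric]
    by (rule wirtinger_cnj_add)
  also have "c 1 = (if m = 0 then 0 else a (single_letter i j))"
    using hom_part_one_coord_point[of i k j n a, OF ij] by (cases m) (simp_all add: c_def series_coeff_def zero_enat_def)
  finally show ?thesis .
qed

lemma gradient_norm_sum_le:
  "(\<Sum>i<k. sqrt (\<Sum>j<n i. (cmod (pderiv_at0 (g_scalar k n a a0 m) i j))\<^sup>2)) \<le> a0 * cos_bound m 1"
proof (cases "m = 0")
  case True
  have "pderiv_at0 (g_scalar k n a a0 m) i j = 0" if "i < k" "j < n i" for i j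
    using pderiv_at0_g_scalar[OF that] True by simp
  then have "(\<Sum>j<n i. (cmod (pderiv_at0 (g_scalar k n a a0 m) i j))\<^sup>2) = 0" if "i < k" for i
    using that by (intro sum.neutral) simp
  then have "(\<Sum>i<k. sqrt (\<Sum>j<n i. (cmod (pderiv_at0 (g_scalar k n a a0 m) i j))\<^sup>2)) = 0"
    by (intro sum.neutral) simp
  moreover have "cos_bound m 1 = 0" by (simp add: True cos_bound_def zero_enat_def)
  ultimately show ?thesis by simp
next
  case False
  define N where "N i = sqrt (\<Sum>j<n i. (cmod (a (single_letter i j)))\<^sup>2)" for i
  have N0: "0 \<le> N i" for i by (simp add: N_def sum_nonneg)
  have N2: "(N i)\<^sup>2 = (\<Sum>j<n i. (cmod (a (single_letter i j)))\<^sup>2)" for i by (simp add: N_def sum_nonneg)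
  have lhs: "(\<Sum>i<k. sqrt (\<Sum>j<n i. (cmod (pderiv_at0 (g_scalar k n a a0 m) i j))\<^sup>2)) = (\<Sum>i<k. N i)"
    by (intro sum.cong refl) (simp add: N_def pderiv_at0_g_scalar False)
  \<comment> \<open>Cauchy-Schwarz extremal point: row \<open>i\<close> is the normalized conjugate of the degree-one coefficients.\<close>
  define z where "z i j = (if N i = 0 then 0 else cnj (a (single_letter i j)) / of_real (N i))" for i j
  have "z \<in> cpolyball k n"
    unfolding cpolyball_def
  proof (intro CollectI allI impI)
    fix i
    show "(\<Sum>j<n i. (cmod (z i j))\<^sup>2) \<le> 1"
    proof (cases "N i = 0")
      case False
      then have "(\<Sum>j<n i. (cmod (z i j))\<^sup>2) = (\<Sum>j<n i. (cmod (a (single_letter i j)))\<^sup>2) / (N i)\<^sup>2"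
        using N0[of i] by (simp add: z_def norm_divide power_divide sum_divide_distrib)
      also have "\<dots> = (N i)\<^sup>2 / (N i)\<^sup>2" by (simp only: N2)
      finally show ?thesis using False by simp
    qed (simp add: z_def)
  qed
  moreover have "enat 1 \<le> m" using False by (cases m) (auto simp: enat_0_iff)
  ultimately have "cmod (hom_part k n a 1 z) \<le> a0 * cos_bound m 1"
    by (intro hom_part_bound) simp_all
  moreover have "cmod (hom_part k n a 1 z) = (\<Sum>i<k. N i)"
  proof -
    have "(\<Sum>j<n i. a (single_letter i j) * z i j) = of_real (N i)" for i
    proof (cases "N i = 0")
      case False
      have "x * cnj x = of_real ((cmod x)\<^sup>2)" for x
        by (rule complex_norm_square[symmetric])
      then have "(\<Sum>j<n i. a (single_letter i j) * z i j) = (\<Sum>j<n i. of_real ((cmod (a (single_letter i j)))\<^sup>2)) / of_real (N i)"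
        by (simp add: z_def False sum_divide_distrib)
      also have "\<dots> = of_real ((N i)\<^sup>2) / of_real (N i)"
        by (simp only: N2 of_real_sum)
      finally have "(\<Sum>j<n i. a (single_letter i j) * z i j) = of_real ((N i)\<^sup>2) / of_real (N i)" .
      then show ?thesis using False by (simp add: power2_eq_square)
    qed (simp add: z_def)
    then have hom_part_z: "hom_part k n a 1 z = of_real (\<Sum>i<k. N i)" unfolding hom_part_one by simp
    show ?thesis unfolding hom_part_z norm_of_real by (simp add: sum_nonneg N0)
  qed
  ultimately show ?thesis unfolding lhs by simp
qed

end

theorem corollary6p2:
  fixes k :: nat and n :: "nat \<Rightarrow> nat" and m :: enat and a0 :: real
    and a :: "(nat \<Rightarrow> nat list) \<Rightarrow> complex"
  assumes "1 \<le> k" and "\<forall>i<k. 1 \<le> n i"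
    and conv: "\<forall>X. in_polyball k n X \<longrightarrow> (\<exists>S. bop S \<and> series_limit k n a m X S)"
    and pos: "\<forall>X S. in_polyball k n X \<and> bop S \<and> series_limit k n a m X S
                 \<longrightarrow> positive_op (g_op a0 S)"
  shows "(\<forall>q. 1 \<le> q \<and> enat q \<le> m \<longrightarrow>
            (SUP z\<in>cpolyball k n. cmod (\<Sum>\<alpha>\<in>Gamma k n q. a \<alpha> * lam_multi k z \<alpha>))
              \<le> a0 * cos_bound m q)
       \<and> (\<Sum>i<k. sqrt (\<Sum>j<n i. (cmod (pderiv_at0 (g_scalar k n a a0 m) i j))\<^sup>2))
              \<le> a0 * cos_bound m 1"
proof -
  interpret positive_pluriharmonic k n a m a0
    by (rule positive_pluriharmonic.intro[OF conv pos])
  have "(\<lambda>i j. 0) \<in> cpolyball k n" by (simp add: cpolyball_def)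
  then have "(SUP z\<in>cpolyball k n. cmod (\<Sum>\<alpha>\<in>Gamma k n q. a \<alpha> * lam_multi k z \<alpha>)) \<le> a0 * cos_bound m q"
    if "1 \<le> q" "enat q \<le> m" for q
    using hom_part_bound[OF _ that] unfolding hom_part_def by (intro cSUP_least) blast+
  with gradient_norm_sum_le show ?thesis by blast
qed

end
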